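(* Let $\Phi$ be a $\mathsf{BST}^{\otimes}$-conjunction and let $\Sigma$ be a partition satisfying $\Phi$ via a partition assignment $\mathfrak I:\mathrm{Vars}(\Phi)\to\mathcal P(\Sigma)$. Let $\mathcal G_\Sigma=(\mathcal P_\Sigma,\mathcal N_\Sigma,\mathcal T_\Sigma)$ be the $\otimes$-graph induced by $\Sigma$ via a bijection $q\mapsto q^{(\bullet)}$ from $\mathcal P_\Sigma$ onto $\Sigma$. Then the map $\mathfrak F_\Sigma(x)=\{q\in\mathcal P_\Sigma : q^{(\bullet)}\in\mathfrak I(x)\}$ ($x\in\mathrm{Vars}(\Phi)$) is a $\mathcal G_\Sigma$-fulfilling map for $\Phi$; in particular $\mathcal G_\Sigma$ fulfills $\Phi$.
   Context: Sets range over the von Neumann universe of well-founded sets. For sets $s,t$, $s\otimes t=\{\{u,v\} : u\in s,\ v\in t\}$. A $\mathsf{BST}^{\otimes}$-conjunction is a finite conjunction of literals of the forms $x=y\cup z$, $x=y\setminus z$, $x=y\otimes z$, $x\neq y$. A partition is a set of pairwise disjoint nonempty sets (blocks). A partition assignment is a map $\mathfrak I:V\to\mathcal P(\Sigma)$ on a finite set $V$ of variables; it induces the set assignment $M_{\mathfrak I}v=\bigcup\mathfrak I(v)$, and $\Sigma$ satisfies $\Phi$ via $\mathfrak I$ if $M_{\mathfrak I}$ satisfies $\Phi$. For a set $S$, $\mathrm{Pow}^*_{1,2}(S)=\{t\subseteq\bigcup S : 1\le|t|\le2,\ t\cap s\neq\emptyset\text{ for all }s\in S\}$, and for a family $\mathcal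 B$, $\mathrm{Pow}^*_{1,2}[\mathcal B]=\{\mathrm{Pow}^*_{1,2}(B):B\in\mathcal B\}$. A subset $\Sigma^*\subseteq\Sigma$ is a $\otimes$-subpartition if $\bigcup\Sigma^*=\bigcup\mathrm{Pow}^*_{1,2}[\mathcal B]$ for some $\mathcal B\subseteq\Sigma\otimes\Sigma$; $\Sigma_\otimes$ is the largest $\otimes$-subpartition (its elements are $\otimes$-blocks) and $\Pi_\otimes\subseteq\Sigma\otimes\Sigma$ is the (unique) set with $\bigcup\Sigma_\otimes=\bigcup\mathrm{Pow}^*_{1,2}[\Pi_\otimes]$. A $\otimes$-graph $\mathcal G=(\mathcal P,\mathcal N,\mathcal T)$ consists of a set $\mathcal P$ of places, nodes $\mathcal N=\mathcal P\otimes\mathcal P$ (nonempty subsets of $\mathcal P$ with at most two elements), $\mathcal P\cap\mathcal N=\emptyset$, and a target map $\mathcal T:\mathcal N\to\mathcal P(\mathcal P)$. The $\otimes$-graph induced by $\Sigma$ via a bijection $q\mapsto q^{(\bullet)}$ from a set of places $\mathcal P_\Sigma$ (with $\mathcal P_\Sigma\cap(\mathcal P_\Sigma\otimes\mathcal P_\Sigma)=\emptyset$) onto $\Sigma$ has nodes $\mathcal N_\Sigma=\mathcal P_\Sigma\otimes\mathcal P_\Sigma$ and, writing $B^{(\bullet)}=\{q^{(\bullet)}:q\in B\}$, target map $\mathcal T_\Sigma(B)=\{q\in\mathcal P_\Sigma : q^{(\bullet)}\in\Sigma_\otimes,\ q^{(\bullet)}\cap\mathrm{Pow}^*_{1,2}(B^{(\bullet)})\neq\emptyset\}$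 if $B^{(\bullet)}\in\Pi_\otimes$, and $\mathcal T_\Sigma(B)=\emptyset$ otherwise. A map $\mathfrak F:\mathrm{Vars}(\Phi)\to\mathcal P(\mathcal P)$ is $\mathcal G$-fulfilling for $\Phi$ if: (a) $\mathfrak F(x)=\mathfrak F(y)\star\mathfrak F(z)$ for each conjunct $x=y\star z$, $\star\in\{\cup,\setminus\}$; (b) $\mathfrak F(x)\neq\mathfrak F(y)$ for each conjunct $x\neq y$; (c) for each conjunct $x=y\otimes z$: (c1) $\emptyset\neq\mathcal T(\{\upsilon,\zeta\})\subseteq\mathfrak F(x)$ for all $\upsilon\in\mathfrak F(y),\zeta\in\mathfrak F(z)$; (c2) $\mathfrak F(x)\subseteq\bigcup\{\mathcal T(A):A\in\mathfrak F(y)\otimes\mathfrak F(z)\}$; (c3) $\bigcup\{\mathcal T(A):A\in\mathcal N\setminus(\mathfrak F(y)\otimes\mathfrak F(z))\}\cap\mathfrak F(x)=\emptyset$. $\mathcal G$ fulfills $\Phi$ if such a map exists. *)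

theory Defs
  imports Main
begin

text \<open>Sets of the von Neumann universe are modelled by an arbitrary type 'a equipped
with a membership map elts. Such a type is a set universe if membership is extensional,
well-founded, and closed under forming singletons and doubletons (the only set
formation the statement needs at the level of elements). Sets of elements (blocks,
values of set assignments) are HOL sets of type 'a set.\<close>

definition set_universe :: "('a \<Rightarrow> 'a set) \<Rightarrow> bool" where
  "set_universe elts \<longleftrightarrow>
     inj elts \<and> wf {(u, w). u \<in> elts w} \<and> (\<forall>u v. \<exists>w. elts w = {u, v})"

definition hotimes :: "'b set \<Rightarrow> 'b set \<Rightarrow> 'b set set" where
  "hotimes s t = {{u, v} | u v. u \<in> s \<and> v \<in> t}"

text \<open>The same operation inside the universe: its members are the elements w
whose extension is a set {u,v} with u in s and v in t.\<close>
definition votimes :: "('a \<Rightarrow> 'a set) \<Rightarrow> 'a set \<Rightarrow> 'a set \<Rightarrow> 'a set" where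
  "votimes elts s t = {w. elts w \<in> hotimes s t}"

datatype 'v lit =
    LUn 'v 'v 'v
  | LDiff 'v 'v 'v
  | LTens 'v 'v 'v
  | LNeq 'v 'v

type_synonym 'v conj = "'v lit list"

fun lit_vars :: "'v lit \<Rightarrow> 'v set" where
  "lit_vars (LUn x y z) = {x, y, z}"
| "lit_vars (LDiff x y z) = {x, y, z}"
| "lit_vars (LTens x y z) = {x, y, z}"
| "lit_vars (LNeq x y) = {x, y}"

definition Vars :: "'v conj \<Rightarrow> 'v set" where
  "Vars \<Phi> = (\<Union>l\<in>set \<Phi>. lit_vars l)"

fun holds_lit :: "('a \<Rightarrow> 'a set) \<Rightarrow> ('v \<Rightarrow> 'a set) \<Rightarrow> 'v lit \<Rightarrow> bool" where
  "holds_lit elts M (LUn x y z) \<longleftrightarrow> M x = M y \<union> M z"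
| "holds_lit elts M (LDiff x y z) \<longleftrightarrow> M x = M y - M z"
| "holds_lit elts M (LTens x y z) \<longleftrightarrow> M x = votimes elts (M y) (M z)"
| "holds_lit elts M (LNeq x y) \<longleftrightarrow> M x \<noteq> M y"

definition satisfies :: "('a \<Rightarrow> 'a set) \<Rightarrow> ('v \<Rightarrow> 'a set) \<Rightarrow> 'v conj \<Rightarrow> bool" where
  "satisfies elts M \<Phi> \<longleftrightarrow> (\<forall>l\<in>set \<Phi>. holds_lit elts M l)"

definition is_partition :: "'b set set \<Rightarrow> bool" where
  "is_partition \<Sigma> \<longleftrightarrow> (\<forall>\<sigma>\<in>\<Sigma>. \<sigma> \<noteq> {}) \<and>
     (\<forall>\<sigma>\<in>\<Sigma>. \<forall>\<tau>\<in>\<Sigma>. \<sigma> \<noteq> \<tau> \<longrightarrow> \<sigma> \<inter> \<tau> = {})"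

definition induced_assign :: "('v \<Rightarrow> 'b set set) \<Rightarrow> 'v \<Rightarrow> 'b set" where
  "induced_assign I v = \<Union>(I v)"

definition satisfies_via :: "('a \<Rightarrow> 'a set) \<Rightarrow> 'a set set \<Rightarrow> ('v \<Rightarrow> 'a set set) \<Rightarrow> 'v conj \<Rightarrow> bool" where
  "satisfies_via elts \<Sigma> I \<Phi> \<longleftrightarrow>
     (\<forall>x\<in>Vars \<Phi>. I x \<subseteq> \<Sigma>) \<and> satisfies elts (induced_assign I) \<Phi>"

definition pow12 :: "'b set set \<Rightarrow> 'b set set" where
  "pow12 S = {t. t \<subseteq> \<Union>S \<and> 1 \<le> card t \<and> card t \<le> 2 \<and> (\<forall>s\<in>S. t \<inter> s \<noteq> {})}"

definition Upow12 :: "('a \<Rightarrow> 'a set) \<Rightarrow> 'a set set set \<Rightarrow> 'a set" where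
  "Upow12 elts \<B> = {w. elts w \<in> (\<Union>B\<in>\<B>. pow12 B)}"

definition otimes_subpartition :: "('a \<Rightarrow> 'a set) \<Rightarrow> 'a set set \<Rightarrow> 'a set set \<Rightarrow> bool" where
  "otimes_subpartition elts \<Sigma> \<Sigma>s \<longleftrightarrow> \<Sigma>s \<subseteq> \<Sigma> \<and>
     (\<exists>\<B>. \<B> \<subseteq> hotimes \<Sigma> \<Sigma> \<and> \<Union>\<Sigma>s = Upow12 elts \<B>)"

definition Sigma_otimes :: "('a \<Rightarrow> 'a set) \<Rightarrow> 'a set set \<Rightarrow> 'a set set" where
  "Sigma_otimes elts \<Sigma> = \<Union>{\<Sigma>s. otimes_subpartition elts \<Sigma> \<Sigma>s}"

definition Pi_otimes :: "('a \<Rightarrow> 'a set) \<Rightarrow> 'a set set \<Rightarrow> 'a set set set" where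
  "Pi_otimes elts \<Sigma> = (THE \<Pi>. \<Pi> \<subseteq> hotimes \<Sigma> \<Sigma> \<and>
      \<Union>(Sigma_otimes elts \<Sigma>) = Upow12 elts \<Pi>)"

text \<open>A otimes-graph is given by its set of places P (a type 'p distinct from
the type 'p set of nodes, so places and nodes are disjoint) and a target map T;
its set of nodes is hotimes P P.\<close>

definition nodes :: "'p set \<Rightarrow> 'p set set" where
  "nodes P = hotimes P P"

definition T_induced :: "('a \<Rightarrow> 'a set) \<Rightarrow> 'a set set \<Rightarrow> 'p set \<Rightarrow> ('p \<Rightarrow> 'a set)
    \<Rightarrow> 'p set \<Rightarrow> 'p set" where
  "T_induced elts \<Sigma> P bul B =
     (if bul ` B \<in> Pi_otimes elts \<Sigma>
      then {q\<in>P. bul q \<in> Sigma_otimes elts \<Sigma> \<and>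
                  (\<exists>w\<in>bul q. elts w \<in> pow12 (bul ` B))}
      else {})"

fun fulfills_lit :: "'p set \<Rightarrow> ('p set \<Rightarrow> 'p set) \<Rightarrow> ('v \<Rightarrow> 'p set) \<Rightarrow> 'v lit \<Rightarrow> bool" where
  "fulfills_lit P T F (LUn x y z) \<longleftrightarrow> F x = F y \<union> F z"
| "fulfills_lit P T F (LDiff x y z) \<longleftrightarrow> F x = F y - F z"
| "fulfills_lit P T F (LNeq x y) \<longleftrightarrow> F x \<noteq> F y"
| "fulfills_lit P T F (LTens x y z) \<longleftrightarrow>
     (\<forall>\<upsilon>\<in>F y. \<forall>\<zeta>\<in>F z. T {\<upsilon>, \<zeta>} \<noteq> {} \<and> T {\<upsilon>, \<zeta>} \<subseteq> F x) \<and>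
     F x \<subseteq> \<Union>(T ` hotimes (F y) (F z)) \<and>
     \<Union>(T ` (nodes P - hotimes (F y) (F z))) \<inter> F x = {}"

definition fulfilling_map :: "'p set \<Rightarrow> ('p set \<Rightarrow> 'p set) \<Rightarrow> 'v conj \<Rightarrow> ('v \<Rightarrow> 'p set) \<Rightarrow> bool" where
  "fulfilling_map P T \<Phi> F \<longleftrightarrow>
     (\<forall>x\<in>Vars \<Phi>. F x \<subseteq> P) \<and> (\<forall>l\<in>set \<Phi>. fulfills_lit P T F l)"

definition graph_fulfills :: "'p set \<Rightarrow> ('p set \<Rightarrow> 'p set) \<Rightarrow> 'v conj \<Rightarrow> bool" where
  "graph_fulfills P T \<Phi> \<longleftrightarrow> (\<exists>F. fulfilling_map P T \<Phi> F)"

end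

theory Submission
  imports Defs
begin

text \<open>The map \<open>F\<^sub>\<Sigma>\<close> is the preimage of the partition assignment under the bijection of places
onto blocks, so union, difference and disequality literals carry over because \<open>\<Union>\<close> is
injective on subfamilies of a partition and commutes there with union and difference.
For a literal \<open>x = y \<otimes> z\<close>, the members of \<open>Pow\<^sup>*\<^sub>1\<^sub>,\<^sub>2({\<sigma>, \<tau>})\<close> are exactly the doubletons \<open>{u, v}\<close>
with \<open>u \<in> \<sigma>\<close>, \<open>v \<in> \<tau>\<close>, and such a doubleton determines the pair of blocks \<open>{\<sigma>, \<tau>}\<close>.
Hence \<open>\<Union>(\<I> x) = \<Union>Pow\<^sup>*\<^sub>1\<^sub>,\<^sub>2[\<I> y \<otimes> \<I> z]\<close>: the family \<open>\<I> x\<close> is itself a \<open>\<otimes>\<close>-subpartition,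
\<open>\<I> y \<otimes> \<I> z \<subseteq> \<Pi>\<^sub>\<otimes>\<close>, and for \<open>\<upsilon>\<^sup>\<bullet> \<in> \<I> y\<close>, \<open>\<zeta>\<^sup>\<bullet> \<in> \<I> z\<close> the target of \<open>{\<upsilon>, \<zeta>}\<close> consists of
the places of those blocks of \<open>\<I> x\<close> that meet \<open>Pow\<^sup>*\<^sub>1\<^sub>,\<^sub>2({\<upsilon>\<^sup>\<bullet>, \<zeta>\<^sup>\<bullet>})\<close>, which gives conditions (c1)--(c3).\<close>

lemma hotimes_iff: "X \<in> hotimes s t \<longleftrightarrow> (\<exists>u\<in>s. \<exists>v\<in>t. X = {u, v})"
  unfolding hotimes_def by blast

lemma hotimes_mono: "s \<subseteq> s' \<Longrightarrow> t \<subseteq> t' \<Longrightarrow> hotimes s t \<subseteq> hotimes s' t'"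
  unfolding hotimes_def by blast

lemma set_universe_doubleton:
  assumes "set_universe elts"
  obtains w where "elts w = {u, v}"
  using assms unfolding set_universe_def by blast

lemma card_1_2_doubleton:
  assumes "1 \<le> card t" "card t \<le> 2"
  obtains c d where "t = {c, d}"
proof -
  have "card t = 1 \<or> card t = 2" using assms by linarith
  then show thesis
    by (metis card_1_singletonE card_2_iff insert_absorb2 that)
qed

lemma pow12_doubleton_iff: "t \<in> pow12 {\<sigma>, \<tau>} \<longleftrightarrow> (\<exists>u\<in>\<sigma>. \<exists>v\<in>\<tau>. t = {u, v})"
proof
  assume t: "t \<in> pow12 {\<sigma>, \<tau>}"
  then have "1 \<le> card t" "card t \<le> 2" unfolding pow12_def by auto
  then obtain c d where cd: "t = {c, d}" by (rule card_1_2_doubleton)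
  have "{c, d} \<subseteq> \<sigma> \<union> \<tau>" "{c, d} \<inter> \<sigma> \<noteq> {}" "{c, d} \<inter> \<tau> \<noteq> {}"
    using t unfolding cd pow12_def by auto
  then have "c \<in> \<sigma> \<and> d \<in> \<tau> \<or> d \<in> \<sigma> \<and> c \<in> \<tau>" by blast
  then show "\<exists>u\<in>\<sigma>. \<exists>v\<in>\<tau>. t = {u, v}"
    unfolding cd by (auto simp: insert_commute)
next
  assume "\<exists>u\<in>\<sigma>. \<exists>v\<in>\<tau>. t = {u, v}"
  then obtain u v where "u \<in> \<sigma>" "v \<in> \<tau>" "t = {u, v}" by blast
  moreover have "1 \<le> card {u, v}" "card {u, v} \<le> 2"
    by (simp_all add: card_insert_if)
  ultimately show "t \<in> pow12 {\<sigma>, \<tau>}" unfolding pow12_def by auto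
qed

lemma Upow12_hotimes_eq_votimes: "Upow12 elts (hotimes Y Z) = votimes elts (\<Union>Y) (\<Union>Z)"
proof (rule set_eqI)
  fix w
  have "w \<in> Upow12 elts (hotimes Y Z) \<longleftrightarrow> (\<exists>\<sigma>\<in>Y. \<exists>\<tau>\<in>Z. elts w \<in> pow12 {\<sigma>, \<tau>})"
    unfolding Upow12_def hotimes_def by blast
  also have "\<dots> \<longleftrightarrow> w \<in> votimes elts (\<Union>Y) (\<Union>Z)"
    unfolding pow12_doubleton_iff votimes_def hotimes_iff by blast
  finally show "w \<in> Upow12 elts (hotimes Y Z) \<longleftrightarrow> w \<in> votimes elts (\<Union>Y) (\<Union>Z)" .
qed

lemma partition_block_eq:
  assumes "is_partition \<Sigma>" "\<sigma> \<in> \<Sigma>" "\<tau> \<in> \<Sigma>" "a \<in> \<sigma>" "a \<in> \<tau>"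
  shows "\<sigma> = \<tau>"
proof (rule ccontr)
  assume "\<sigma> \<noteq> \<tau>"
  with assms(1-3) have "\<sigma> \<inter> \<tau> = {}" unfolding is_partition_def by simp
  with assms(4,5) show False by blast
qed

lemma partition_block_nonempty:
  assumes "is_partition \<Sigma>" "\<sigma> \<in> \<Sigma>"
  obtains a where "a \<in> \<sigma>"
proof -
  from assms have "\<sigma> \<noteq> {}" unfolding is_partition_def by simp
  then show thesis using that by blast
qed

lemma partition_Union_inj:
  assumes "is_partition \<Sigma>" "A \<subseteq> \<Sigma>" "B \<subseteq> \<Sigma>" "\<Union>A = \<Union>B"
  shows "A = B"
proof -
  have sub: "X \<subseteq> Y" if X: "X \<subseteq> \<Sigma>" and Y: "Y \<subseteq> \<Sigma>" and XY: "\<Union>X = \<Union>Y" for X Y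
  proof
    fix \<sigma> assume "\<sigma> \<in> X"
    then have "\<sigma> \<in> \<Sigma>" using X by blast
    then obtain a where "a \<in> \<sigma>" by (rule partition_block_nonempty[OF assms(1)])
    with \<open>\<sigma> \<in> X\<close> XY obtain \<tau> where "\<tau> \<in> Y" "a \<in> \<tau>" by blast
    moreover from \<open>\<tau> \<in> Y\<close> Y have "\<tau> \<in> \<Sigma>" by blast
    ultimately have "\<sigma> = \<tau>"
      using partition_block_eq[OF assms(1) \<open>\<sigma> \<in> \<Sigma>\<close>] \<open>a \<in> \<sigma>\<close> by blast
    with \<open>\<tau> \<in> Y\<close> show "\<sigma> \<in> Y" by simp
  qed
  from sub[OF assms(2-4)] sub[OF assms(3,2) assms(4)[symmetric]] show ?thesis by (rule subset_antisym)
qed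

lemma partition_Union_diff:
  assumes "is_partition \<Sigma>" "A \<subseteq> \<Sigma>" "B \<subseteq> \<Sigma>"
  shows "\<Union>(A - B) = \<Union>A - \<Union>B"
proof
  show "\<Union>(A - B) \<subseteq> \<Union>A - \<Union>B"
  proof
    fix a assume "a \<in> \<Union>(A - B)"
    then obtain \<sigma> where \<sigma>: "\<sigma> \<in> A" "\<sigma> \<notin> B" "a \<in> \<sigma>" by blast
    have "\<sigma> \<noteq> \<tau>" if "\<tau> \<in> B" for \<tau> using \<sigma>(2) that by blast
    then have "a \<notin> \<tau>" if "\<tau> \<in> B" for \<tau>
      using partition_block_eq[OF assms(1)] \<sigma>(1,3) assms(2,3) that by blast
    with \<sigma> show "a \<in> \<Union>A - \<Union>B" by blast
  qed
qed blast

lemma partition_doubleton_blocks_eq: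
  assumes "is_partition \<Sigma>" "\<sigma> \<in> \<Sigma>" "\<tau> \<in> \<Sigma>" "\<sigma>' \<in> \<Sigma>" "\<tau>' \<in> \<Sigma>"
    and "u \<in> \<sigma>" "v \<in> \<tau>" "u' \<in> \<sigma>'" "v' \<in> \<tau>'" "{u, v} = {u', v'}"
  shows "{\<sigma>, \<tau>} = {\<sigma>', \<tau>'}"
proof -
  from assms(10) have "u = u' \<and> v = v' \<or> u = v' \<and> v = u'" by (rule doubleton_eq_iff[THEN iffD1])
  then show ?thesis
  proof
    assume "u = u' \<and> v = v'"
    then have "\<sigma> = \<sigma>'" "\<tau> = \<tau>'"
      using partition_block_eq[OF assms(1,2,4) assms(6)] partition_block_eq[OF assms(1,3,5) assms(7)]
        assms(8,9) by simp_all
    then show ?thesis by simp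
  next
    assume "u = v' \<and> v = u'"
    then have "\<sigma> = \<tau>'" "\<tau> = \<sigma>'"
      using partition_block_eq[OF assms(1,2,5) assms(6)] partition_block_eq[OF assms(1,3,4) assms(7)]
        assms(8,9) by simp_all
    then show ?thesis by auto
  qed
qed

lemma pow12_hotimes_unique:
  assumes "is_partition \<Sigma>" "B \<in> hotimes \<Sigma> \<Sigma>" "B' \<in> hotimes \<Sigma> \<Sigma>"
    and "t \<in> pow12 B" "t \<in> pow12 B'"
  shows "B = B'"
proof -
  obtain \<sigma> \<tau> \<sigma>' \<tau>' where blocks: "\<sigma> \<in> \<Sigma>" "\<tau> \<in> \<Sigma>" "\<sigma>' \<in> \<Sigma>" "\<tau>' \<in> \<Sigma>"
    and B: "B = {\<sigma>, \<tau>}" "B' = {\<sigma>', \<tau>'}"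
    using assms(2,3) unfolding hotimes_iff by blast
  obtain u v u' v' where elems: "u \<in> \<sigma>" "v \<in> \<tau>" "u' \<in> \<sigma>'" "v' \<in> \<tau>'"
    and t: "t = {u, v}" "t = {u', v'}"
    using assms(4,5) unfolding B pow12_doubleton_iff by blast
  from t have "{u, v} = {u', v'}" by simp
  from partition_doubleton_blocks_eq[OF assms(1) blocks elems this] show ?thesis unfolding B .
qed

lemma pow12_hotimes_realized:
  assumes "set_universe elts" "is_partition \<Sigma>" "B \<in> hotimes \<Sigma> \<Sigma>"
  obtains w where "elts w \<in> pow12 B"
proof -
  obtain \<sigma> \<tau> where "\<sigma> \<in> \<Sigma>" "\<tau> \<in> \<Sigma>" and B: "B = {\<sigma>, \<tau>}"
    using assms(3) unfolding hotimes_iff by blast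
  then obtain u v where "u \<in> \<sigma>" "v \<in> \<tau>"
    using partition_block_nonempty[OF assms(2)] by metis
  moreover obtain w where "elts w = {u, v}" using set_universe_doubleton[OF assms(1)] .
  ultimately have "elts w \<in> pow12 B" unfolding B pow12_doubleton_iff by blast
  then show thesis by (rule that)
qed

lemma Upow12_subset_imp_subset:
  assumes "set_universe elts" "is_partition \<Sigma>"
    and "\<Pi>1 \<subseteq> hotimes \<Sigma> \<Sigma>" "\<Pi>2 \<subseteq> hotimes \<Sigma> \<Sigma>"
    and "Upow12 elts \<Pi>1 \<subseteq> Upow12 elts \<Pi>2"
  shows "\<Pi>1 \<subseteq> \<Pi>2"
proof
  fix B assume "B \<in> \<Pi>1"
  with assms(3) have B: "B \<in> hotimes \<Sigma> \<Sigma>" by blast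
  obtain w where w: "elts w \<in> pow12 B" by (rule pow12_hotimes_realized[OF assms(1,2) B])
  with \<open>B \<in> \<Pi>1\<close> have "w \<in> Upow12 elts \<Pi>1" unfolding Upow12_def by blast
  with assms(5) have "w \<in> Upow12 elts \<Pi>2" by (rule subsetD)
  then obtain B' where "B' \<in> \<Pi>2" and w': "elts w \<in> pow12 B'" unfolding Upow12_def by blast
  from assms(4) \<open>B' \<in> \<Pi>2\<close> have B': "B' \<in> hotimes \<Sigma> \<Sigma>" by (rule subsetD)
  from pow12_hotimes_unique[OF assms(2) B B' w w'] \<open>B' \<in> \<Pi>2\<close> show "B \<in> \<Pi>2" by simp
qed

lemma Upow12_Union: "Upow12 elts (\<Union>\<BB>) = (\<Union>\<B>\<in>\<BB>. Upow12 elts \<B>)"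
  unfolding Upow12_def by blast

lemma Sigma_otimes_Upow12_base:
  obtains \<Pi> where "\<Pi> \<subseteq> hotimes \<Sigma> \<Sigma>" "\<Union>(Sigma_otimes elts \<Sigma>) = Upow12 elts \<Pi>"
proof
  define \<BB> where "\<BB> = {\<B>. \<B> \<subseteq> hotimes \<Sigma> \<Sigma> \<and> (\<exists>\<Sigma>s\<subseteq>\<Sigma>. \<Union>\<Sigma>s = Upow12 elts \<B>)}"
  show "\<Union>\<BB> \<subseteq> hotimes \<Sigma> \<Sigma>" unfolding \<BB>_def by blast
  have "\<Union>(Sigma_otimes elts \<Sigma>) = (\<Union>\<Sigma>s\<in>{\<Sigma>s. otimes_subpartition elts \<Sigma> \<Sigma>s}. \<Union>\<Sigma>s)"
    unfolding Sigma_otimes_def by blast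
  also have "\<dots> = (\<Union>\<B>\<in>\<BB>. Upow12 elts \<B>)"
    unfolding otimes_subpartition_def \<BB>_def by (rule set_eqI) (smt (verit) UN_iff mem_Collect_eq)
  finally show "\<Union>(Sigma_otimes elts \<Sigma>) = Upow12 elts (\<Union>\<BB>)" by (simp only: Upow12_Union)
qed

lemma Pi_otimes_spec:
  assumes "set_universe elts" "is_partition \<Sigma>"
  shows "Pi_otimes elts \<Sigma> \<subseteq> hotimes \<Sigma> \<Sigma> \<and>
    \<Union>(Sigma_otimes elts \<Sigma>) = Upow12 elts (Pi_otimes elts \<Sigma>)"
proof -
  obtain \<Pi>0 where \<Pi>0: "\<Pi>0 \<subseteq> hotimes \<Sigma> \<Sigma>" "\<Union>(Sigma_otimes elts \<Sigma>) = Upow12 elts \<Pi>0"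
    by (rule Sigma_otimes_Upow12_base)
  have "\<exists>!\<Pi>. \<Pi> \<subseteq> hotimes \<Sigma> \<Sigma> \<and> \<Union>(Sigma_otimes elts \<Sigma>) = Upow12 elts \<Pi>"
  proof (rule ex1I[of _ \<Pi>0])
    fix \<Pi> assume \<Pi>: "\<Pi> \<subseteq> hotimes \<Sigma> \<Sigma> \<and> \<Union>(Sigma_otimes elts \<Sigma>) = Upow12 elts \<Pi>"
    with \<Pi>0 have "\<Pi> \<subseteq> \<Pi>0" "\<Pi>0 \<subseteq> \<Pi>"
      using Upow12_subset_imp_subset[OF assms] by simp_all
    then show "\<Pi> = \<Pi>0" by (rule subset_antisym)
  qed (use \<Pi>0 in blast)
  then show ?thesis unfolding Pi_otimes_def by (rule theI')
qed

lemma T_induced_doubleton_iff: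
  "q \<in> T_induced elts \<Sigma> P bul {a, b} \<longleftrightarrow>
     {bul a, bul b} \<in> Pi_otimes elts \<Sigma> \<and> q \<in> P \<and> bul q \<in> Sigma_otimes elts \<Sigma> \<and>
     (\<exists>w\<in>bul q. elts w \<in> pow12 {bul a, bul b})"
  unfolding T_induced_def by simp

lemma doubleton_in_hotimes_preimage:
  assumes "a \<in> P" "b \<in> P" "{bul a, bul b} = {\<sigma>, \<tau>}" "\<sigma> \<in> Y" "\<tau> \<in> Z"
  shows "{a, b} \<in> hotimes {q\<in>P. bul q \<in> Y} {q\<in>P. bul q \<in> Z}"
proof -
  from assms(3) have "bul a = \<sigma> \<and> bul b = \<tau> \<or> bul a = \<tau> \<and> bul b = \<sigma>"
    by (rule doubleton_eq_iff[THEN iffD1])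
  then show ?thesis
    using assms(1,2,4,5) unfolding hotimes_iff by (auto simp: insert_commute)
qed

context
  fixes elts :: "'a \<Rightarrow> 'a set" and \<Sigma> X Y Z :: "'a set set" and P :: "'p set" and bul
  assumes universe: "set_universe elts" and partition: "is_partition \<Sigma>"
    and bij: "bij_betw bul P \<Sigma>"
    and X_sub: "X \<subseteq> \<Sigma>" and Y_sub: "Y \<subseteq> \<Sigma>" and Z_sub: "Z \<subseteq> \<Sigma>"
    and X_eq: "\<Union>X = Upow12 elts (hotimes Y Z)"
begin

lemma X_subset_Sigma_otimes: "X \<subseteq> Sigma_otimes elts \<Sigma>"
proof -
  have "otimes_subpartition elts \<Sigma> X"
    unfolding otimes_subpartition_def using X_sub X_eq hotimes_mono[OF Y_sub Z_sub] by blast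
  then show ?thesis unfolding Sigma_otimes_def by blast
qed

lemma hotimes_subset_Pi_otimes: "hotimes Y Z \<subseteq> Pi_otimes elts \<Sigma>"
proof (rule Upow12_subset_imp_subset[OF universe partition])
  show "hotimes Y Z \<subseteq> hotimes \<Sigma> \<Sigma>" by (rule hotimes_mono[OF Y_sub Z_sub])
  show "Pi_otimes elts \<Sigma> \<subseteq> hotimes \<Sigma> \<Sigma>" using Pi_otimes_spec[OF universe partition] ..
  have "Upow12 elts (hotimes Y Z) \<subseteq> \<Union>(Sigma_otimes elts \<Sigma>)"
    using X_eq X_subset_Sigma_otimes by blast
  then show "Upow12 elts (hotimes Y Z) \<subseteq> Upow12 elts (Pi_otimes elts \<Sigma>)"
    using Pi_otimes_spec[OF universe partition] by simp
qed

lemma place_in_X_iff: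
  assumes "q \<in> P" "w \<in> bul q"
  shows "bul q \<in> X \<longleftrightarrow> (\<exists>\<sigma>\<in>Y. \<exists>\<tau>\<in>Z. elts w \<in> pow12 {\<sigma>, \<tau>})"
proof
  assume "bul q \<in> X"
  with assms(2) have "w \<in> Upow12 elts (hotimes Y Z)" using X_eq by blast
  then show "\<exists>\<sigma>\<in>Y. \<exists>\<tau>\<in>Z. elts w \<in> pow12 {\<sigma>, \<tau>}" unfolding Upow12_def hotimes_def by blast
next
  assume "\<exists>\<sigma>\<in>Y. \<exists>\<tau>\<in>Z. elts w \<in> pow12 {\<sigma>, \<tau>}"
  then have "w \<in> Upow12 elts (hotimes Y Z)" unfolding Upow12_def hotimes_def by blast
  then obtain \<rho> where "\<rho> \<in> X" "w \<in> \<rho>" using X_eq by blast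
  moreover from \<open>\<rho> \<in> X\<close> X_sub have "\<rho> \<in> \<Sigma>" by blast
  ultimately have "bul q = \<rho>"
    using partition_block_eq[OF partition bij_betw_apply[OF bij assms(1)] _ assms(2)] by blast
  with \<open>\<rho> \<in> X\<close> show "bul q \<in> X" by simp
qed

lemma Pi_otimes_doubleton:
  assumes "bul \<upsilon> \<in> Y" "bul \<zeta> \<in> Z"
  shows "{bul \<upsilon>, bul \<zeta>} \<in> Pi_otimes elts \<Sigma>"
proof -
  from assms have "{bul \<upsilon>, bul \<zeta>} \<in> hotimes Y Z" unfolding hotimes_iff by blast
  then show ?thesis by (rule subsetD[OF hotimes_subset_Pi_otimes])
qed

lemma T_induced_doubleton_nonempty:
  assumes "\<upsilon> \<in> P" "bul \<upsilon> \<in> Y" "\<zeta> \<in> P" "bul \<zeta> \<in> Z"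
  shows "T_induced elts \<Sigma> P bul {\<upsilon>, \<zeta>} \<noteq> {}"
proof -
  have "{bul \<upsilon>, bul \<zeta>} \<in> hotimes Y Z" using assms(2,4) unfolding hotimes_iff by blast
  moreover from this have "{bul \<upsilon>, bul \<zeta>} \<in> hotimes \<Sigma> \<Sigma>"
    using hotimes_mono[OF Y_sub Z_sub] by (rule rev_subsetD)
  then obtain w where w: "elts w \<in> pow12 {bul \<upsilon>, bul \<zeta>}"
    by (rule pow12_hotimes_realized[OF universe partition])
  ultimately have "w \<in> Upow12 elts (hotimes Y Z)" unfolding Upow12_def by blast
  then obtain \<rho> where "\<rho> \<in> X" "w \<in> \<rho>" using X_eq by blast
  moreover from \<open>\<rho> \<in> X\<close> X_sub obtain q where "q \<in> P" "bul q = \<rho>"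
    using bij unfolding bij_betw_def by blast
  ultimately have "q \<in> T_induced elts \<Sigma> P bul {\<upsilon>, \<zeta>}"
    using w X_subset_Sigma_otimes Pi_otimes_doubleton[OF assms(2,4)]
    unfolding T_induced_doubleton_iff by blast
  then show ?thesis by blast
qed

lemma T_induced_doubleton_target_in_X:
  assumes "q \<in> T_induced elts \<Sigma> P bul {\<upsilon>, \<zeta>}" "bul \<upsilon> \<in> Y" "bul \<zeta> \<in> Z"
  shows "bul q \<in> X"
proof -
  from assms(1) obtain w where "q \<in> P" "w \<in> bul q" "elts w \<in> pow12 {bul \<upsilon>, bul \<zeta>}"
    unfolding T_induced_doubleton_iff by blast
  with assms(2,3) show ?thesis using place_in_X_iff by blast
qed

lemma place_in_X_covered:
  assumes "q \<in> P" "bul q \<in> X"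
  obtains \<upsilon> \<zeta> where "\<upsilon> \<in> P" "bul \<upsilon> \<in> Y" "\<zeta> \<in> P" "bul \<zeta> \<in> Z"
    and "q \<in> T_induced elts \<Sigma> P bul {\<upsilon>, \<zeta>}"
proof -
  from assms(2) X_sub obtain w where w: "w \<in> bul q"
    using partition_block_nonempty[OF partition] by blast
  with assms obtain \<sigma> \<tau> where "\<sigma> \<in> Y" "\<tau> \<in> Z" "elts w \<in> pow12 {\<sigma>, \<tau>}"
    using place_in_X_iff by blast
  moreover from this obtain \<upsilon> \<zeta> where "\<upsilon> \<in> P" "bul \<upsilon> = \<sigma>" "\<zeta> \<in> P" "bul \<zeta> = \<tau>"
    using bij Y_sub Z_sub unfolding bij_betw_def by blast
  moreover have "bul q \<in> Sigma_otimes elts \<Sigma>" using assms(2) X_subset_Sigma_otimes by blast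
  ultimately show thesis
    using that assms(1) w Pi_otimes_doubleton unfolding T_induced_doubleton_iff by blast
qed

lemma T_induced_target_in_X_imp_hotimes:
  assumes "a \<in> P" "b \<in> P" "q \<in> T_induced elts \<Sigma> P bul {a, b}" "bul q \<in> X"
  shows "{a, b} \<in> hotimes {q\<in>P. bul q \<in> Y} {q\<in>P. bul q \<in> Z}"
proof -
  from assms(3) obtain w where "q \<in> P" "w \<in> bul q" and w: "elts w \<in> pow12 {bul a, bul b}"
    unfolding T_induced_doubleton_iff by blast
  with assms(4) obtain \<sigma> \<tau> where "\<sigma> \<in> Y" "\<tau> \<in> Z" and w': "elts w \<in> pow12 {\<sigma>, \<tau>}"
    using place_in_X_iff by blast
  have "{bul a, bul b} \<in> hotimes \<Sigma> \<Sigma>"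
    using bij_betw_apply[OF bij assms(1)] bij_betw_apply[OF bij assms(2)] unfolding hotimes_iff by blast
  moreover have "{\<sigma>, \<tau>} \<in> hotimes \<Sigma> \<Sigma>"
    using \<open>\<sigma> \<in> Y\<close> \<open>\<tau> \<in> Z\<close> Y_sub Z_sub unfolding hotimes_iff by blast
  ultimately have "{bul a, bul b} = {\<sigma>, \<tau>}" by (rule pow12_hotimes_unique[OF partition _ _ w w'])
  then show ?thesis
    by (rule doubleton_in_hotimes_preimage[OF assms(1,2) _ \<open>\<sigma> \<in> Y\<close> \<open>\<tau> \<in> Z\<close>])
qed

lemma fulfills_LTens:
  assumes Fx: "F x = {q\<in>P. bul q \<in> X}" and Fy: "F y = {q\<in>P. bul q \<in> Y}"
    and Fz: "F z = {q\<in>P. bul q \<in> Z}"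
  shows "fulfills_lit P (T_induced elts \<Sigma> P bul) F (LTens x y z)"
  unfolding fulfills_lit.simps
proof (intro conjI ballI subsetI)
  fix \<upsilon> \<zeta> assume "\<upsilon> \<in> F y" "\<zeta> \<in> F z"
  with Fy Fz have \<upsilon>: "\<upsilon> \<in> P" "bul \<upsilon> \<in> Y" and \<zeta>: "\<zeta> \<in> P" "bul \<zeta> \<in> Z" by simp_all
  show "T_induced elts \<Sigma> P bul {\<upsilon>, \<zeta>} \<noteq> {}"
    by (rule T_induced_doubleton_nonempty[OF \<upsilon> \<zeta>])
  fix q assume q: "q \<in> T_induced elts \<Sigma> P bul {\<upsilon>, \<zeta>}"
  then have "q \<in> P" unfolding T_induced_doubleton_iff by simp
  with T_induced_doubleton_target_in_X[OF q \<upsilon>(2) \<zeta>(2)] show "q \<in> F x" unfolding Fx by simp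
next
  fix q assume "q \<in> F x"
  with Fx have "q \<in> P" "bul q \<in> X" by simp_all
  then obtain \<upsilon> \<zeta> where "\<upsilon> \<in> P" "bul \<upsilon> \<in> Y" "\<zeta> \<in> P" "bul \<zeta> \<in> Z"
    and q: "q \<in> T_induced elts \<Sigma> P bul {\<upsilon>, \<zeta>}" by (rule place_in_X_covered)
  then have "{\<upsilon>, \<zeta>} \<in> hotimes (F y) (F z)" unfolding Fy Fz hotimes_iff by blast
  with q show "q \<in> \<Union>(T_induced elts \<Sigma> P bul ` hotimes (F y) (F z))" by blast
next
  show "\<Union>(T_induced elts \<Sigma> P bul ` (nodes P - hotimes (F y) (F z))) \<inter> F x = {}"
  proof (rule equals0I)
    fix q assume "q \<in> \<Union>(T_induced elts \<Sigma> P bul ` (nodes P - hotimes (F y) (F z))) \<inter> F x"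
    then obtain A where A: "A \<in> nodes P" "A \<notin> hotimes (F y) (F z)"
      and q: "q \<in> T_induced elts \<Sigma> P bul A" "q \<in> F x" by blast
    from A(1) obtain a b where ab: "a \<in> P" "b \<in> P" "A = {a, b}" unfolding nodes_def hotimes_iff by blast
    from q(2) have "bul q \<in> X" unfolding Fx by simp
    from T_induced_target_in_X_imp_hotimes[OF ab(1,2) q(1)[unfolded ab(3)] this] A(2) show False
      unfolding ab(3) Fy Fz by simp
  qed
qed

end

lemma bij_betw_preimage_inj:
  assumes "bij_betw f P \<Sigma>" "A \<subseteq> \<Sigma>" "B \<subseteq> \<Sigma>" "{q\<in>P. f q \<in> A} = {q\<in>P. f q \<in> B}"
  shows "A = B"
proof -
  have "f ` {q\<in>P. f q \<in> C} = C" if "C \<subseteq> \<Sigma>" for C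
  proof
    show "C \<subseteq> f ` {q\<in>P. f q \<in> C}"
    proof
      fix c assume "c \<in> C"
      with that have "c \<in> f ` P" using bij_betw_imp_surj_on[OF assms(1)] by auto
      then obtain q where "q \<in> P" "c = f q" by (rule imageE)
      with \<open>c \<in> C\<close> show "c \<in> f ` {q\<in>P. f q \<in> C}" by simp
    qed
  qed auto
  then have "A = f ` {q\<in>P. f q \<in> A}" "f ` {q\<in>P. f q \<in> B} = B"
    using assms(2,3) by simp_all
  with assms(4) show ?thesis by simp
qed

lemma fulfills_lit_induced:
  assumes universe: "set_universe elts" and partition: "is_partition \<Sigma>"
    and bij: "bij_betw bul P \<Sigma>"
    and blocks: "\<forall>v\<in>lit_vars l. I v \<subseteq> \<Sigma>" and holds: "holds_lit elts (induced_assign I) l"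
  shows "fulfills_lit P (T_induced elts \<Sigma> P bul) (\<lambda>v. {q\<in>P. bul q \<in> I v}) l"
proof (cases l)
  case (LUn x y z)
  from LUn blocks have "I x \<subseteq> \<Sigma>" "I y \<union> I z \<subseteq> \<Sigma>" by simp_all
  moreover from LUn holds have "\<Union>(I x) = \<Union>(I y \<union> I z)" by (simp add: induced_assign_def)
  ultimately have "I x = I y \<union> I z" by (rule partition_Union_inj[OF partition])
  with LUn show ?thesis by auto
next
  case (LDiff x y z)
  from LDiff blocks have S: "I x \<subseteq> \<Sigma>" "I y \<subseteq> \<Sigma>" "I z \<subseteq> \<Sigma>" by simp_all
  from LDiff holds have "\<Union>(I x) = \<Union>(I y - I z)"
    by (simp add: induced_assign_def partition_Union_diff[OF partition S(2,3)])
  moreover from S have "I y - I z \<subseteq> \<Sigma>" by blast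
  ultimately have "I x = I y - I z" using partition_Union_inj[OF partition S(1)] by simp
  with LDiff show ?thesis by auto
next
  case (LTens x y z)
  from LTens blocks have S: "I x \<subseteq> \<Sigma>" "I y \<subseteq> \<Sigma>" "I z \<subseteq> \<Sigma>" by simp_all
  from LTens holds have "\<Union>(I x) = Upow12 elts (hotimes (I y) (I z))"
    by (simp add: induced_assign_def Upow12_hotimes_eq_votimes)
  then show ?thesis unfolding LTens by (rule fulfills_LTens[OF universe partition bij S]) simp_all
next
  case (LNeq x y)
  from LNeq blocks have S: "I x \<subseteq> \<Sigma>" "I y \<subseteq> \<Sigma>" by simp_all
  from LNeq holds have "I x \<noteq> I y" by (auto simp: induced_assign_def)
  then have "{q\<in>P. bul q \<in> I x} \<noteq> {q\<in>P. bul q \<in> I y}"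
    using bij_betw_preimage_inj[OF bij S] by blast
  with LNeq show ?thesis by simp
qed

theorem mainTheorem8:
  fixes elts :: "'a \<Rightarrow> 'a set"
    and \<Phi> :: "'v lit list"
    and \<Sigma> :: "'a set set"
    and I :: "'v \<Rightarrow> 'a set set"
    and P :: "'p set"
    and bul :: "'p \<Rightarrow> 'a set"
  assumes "set_universe elts"
    and "is_partition \<Sigma>"
    and "satisfies_via elts \<Sigma> I \<Phi>"
    and "bij_betw bul P \<Sigma>"
  shows "fulfilling_map P (T_induced elts \<Sigma> P bul) \<Phi> (\<lambda>x. {q\<in>P. bul q \<in> I x})
       \<and> graph_fulfills P (T_induced elts \<Sigma> P bul) \<Phi>"
proof -
  have "fulfills_lit P (T_induced elts \<Sigma> P bul) (\<lambda>x. {q\<in>P. bul q \<in> I x}) l" if "l \<in> set \<Phi>" for l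
  proof (rule fulfills_lit_induced[OF assms(1,2,4)])
    show "\<forall>v\<in>lit_vars l. I v \<subseteq> \<Sigma>"
      using assms(3) that unfolding satisfies_via_def Vars_def by blast
    show "holds_lit elts (induced_assign I) l"
      using assms(3) that unfolding satisfies_via_def satisfies_def by blast
  qed
  then have "fulfilling_map P (T_induced elts \<Sigma> P bul) \<Phi> (\<lambda>x. {q\<in>P. bul q \<in> I x})"
    unfolding fulfilling_map_def by blast
  then show ?thesis unfolding graph_fulfills_def by blast
qed

end
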